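(* Let $m>0$ and let $f\colon\mathbb{C}\mathbb{P}^m\to\mathbb{C}\mathbb{P}^N$ be an algebraic morphism given by $[x]\mapsto[f_0(x),\dots,f_N(x)]$, where $f_0,\dots,f_N$ are linearly independent homogeneous polynomials of degree $d$. If $f$ is projectively $k$-regular, then $d\ge k-1$.
   Context: A map $f\colon\mathbb{C}\mathbb{P}^m\to\mathbb{C}\mathbb{P}^N$ is projectively $k$-regular if the images of any $k$ distinct points span a $(k-1)$-dimensional projective linear subspace. *)

theory Defs
  imports Complex_Main
begin

text \<open>Vectors of C^(m+1) are functions nat => complex, coordinates 0..m (zero beyond m).\<close>

definition mexps :: "nat \<Rightarrow> nat \<Rightarrow> (nat \<Rightarrow> nat) set" where
  "mexps m d = {\<alpha>. (\<forall>i>m. \<alpha> i = 0) \<and> (\<Sum>i\<le>m. \<alpha> i) = d}"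

definition hpoly_eval :: "nat \<Rightarrow> nat \<Rightarrow> ((nat \<Rightarrow> nat) \<Rightarrow> complex) \<Rightarrow> (nat \<Rightarrow> complex) \<Rightarrow> complex" where
  "hpoly_eval m d c x = (\<Sum>\<alpha>\<in>mexps m d. c \<alpha> * (\<Prod>i\<le>m. x i ^ \<alpha> i))"

definition polys_lin_indep :: "nat \<Rightarrow> nat \<Rightarrow> nat \<Rightarrow> (nat \<Rightarrow> (nat \<Rightarrow> nat) \<Rightarrow> complex) \<Rightarrow> bool" where
  "polys_lin_indep m d N c \<longleftrightarrow>
     (\<forall>a::nat \<Rightarrow> complex. (\<forall>\<alpha>\<in>mexps m d. (\<Sum>j\<le>N. a j * c j \<alpha>) = 0) \<longrightarrow> (\<forall>j\<le>N. a j = 0))"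

text \<open>Nonzero vectors of C^(m+1), i.e. representatives of points of CP^m.\<close>
definition nzvecs :: "nat \<Rightarrow> (nat \<Rightarrow> complex) set" where
  "nzvecs m = {x. (\<forall>i>m. x i = 0) \<and> (\<exists>i\<le>m. x i \<noteq> 0)}"

definition proj_eq :: "nat \<Rightarrow> (nat \<Rightarrow> complex) \<Rightarrow> (nat \<Rightarrow> complex) \<Rightarrow> bool" where
  "proj_eq m x y \<longleftrightarrow> (\<exists>t. t \<noteq> 0 \<and> (\<forall>i\<le>m. y i = t * x i))"

definition is_morphism :: "nat \<Rightarrow> nat \<Rightarrow> nat \<Rightarrow> (nat \<Rightarrow> (nat \<Rightarrow> nat) \<Rightarrow> complex) \<Rightarrow> bool" where
  "is_morphism m d N c \<longleftrightarrow> (\<forall>x\<in>nzvecs m. \<exists>j\<le>N. hpoly_eval m d (c j) x \<noteq> 0)"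

definition vecs_lin_indep :: "nat \<Rightarrow> nat \<Rightarrow> (nat \<Rightarrow> nat \<Rightarrow> complex) \<Rightarrow> bool" where
  "vecs_lin_indep N k v \<longleftrightarrow>
     (\<forall>a::nat \<Rightarrow> complex. (\<forall>j\<le>N. (\<Sum>i<k. a i * v i j) = 0) \<longrightarrow> (\<forall>i<k. a i = 0))"

text \<open>Projective k-regularity: images of any k distinct points of CP^m span a (k-1)-dimensional
  projective subspace, i.e. their representative vectors in C^(N+1) are linearly independent.\<close>
definition proj_k_regular :: "nat \<Rightarrow> nat \<Rightarrow> nat \<Rightarrow> (nat \<Rightarrow> (nat \<Rightarrow> nat) \<Rightarrow> complex) \<Rightarrow> nat \<Rightarrow> bool" where
  "proj_k_regular m d N c k \<longleftrightarrow>
     (\<forall>p :: nat \<Rightarrow> nat \<Rightarrow> complex.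
        (\<forall>i<k. p i \<in> nzvecs m) \<and> (\<forall>i<k. \<forall>i'<k. i \<noteq> i' \<longrightarrow> \<not> proj_eq m (p i) (p i'))
        \<longrightarrow> vecs_lin_indep N k (\<lambda>i j. hpoly_eval m d (c j) (p i)))"

end

theory Submission
  imports Defs
begin

text \<open>If \<open>d \<le> k - 2\<close>, put \<open>k\<close> points on the line \<open>[1 : s : 0 : \<dots> : 0]\<close> at the \<open>k\<close>-th roots
  of unity \<open>s = \<omega>\<^sup>i\<close>. Restricted to this line every monomial of degree \<open>d\<close> becomes \<open>s\<^sup>e\<close> times
  a constant with \<open>e \<le> d\<close>, and \<open>\<Sum>\<^sub>i \<omega>\<^sup>i (\<omega>\<^sup>i)\<^sup>e = \<Sum>\<^sub>i (\<omega>\<^sup>e\<^sup>+\<^sup>1)\<^sup>i = 0\<close> because \<open>0 < e + 1 < k\<close>.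
  So the images of these \<open>k\<close> distinct points satisfy a nontrivial linear relation.\<close>

lemma inj_on_root_of_unity_powers: "inj_on (\<lambda>i. cis (2 * pi / n) ^ i) {..<n}"
proof -
  have "inj_on (\<lambda>i. cis (2 * pi * real i / real n)) {..<n}" if "n > 0"
    using bij_betw_roots_unity[OF that] by (rule bij_betw_imp_inj_on)
  moreover have "cis (2 * pi / n) ^ i = cis (2 * pi * real i / real n)" for i
    by (simp add: DeMoivre mult_ac)
  ultimately show ?thesis
    by (cases "n = 0") auto
qed

lemma sum_root_of_unity_weighted_powers:
  assumes "e + 1 < n"
  shows "(\<Sum>i<n. cis (2 * pi / n) ^ i * (cis (2 * pi / n) ^ i) ^ e) = 0"
proof -
  define \<omega> where "\<omega> = cis (2 * pi / n)"
  have "\<omega> ^ (e + 1) \<noteq> \<omega> ^ 0"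
    using inj_on_root_of_unity_powers[of n] assms
    unfolding \<omega>_def by (auto dest: inj_onD[where x = "e + 1" and y = 0])
  moreover have "\<omega> ^ n = 1"
    using assms by (simp add: \<omega>_def DeMoivre)
  then have "(\<omega> ^ (e + 1)) ^ n = 1"
    by (metis power_mult power_one mult.commute)
  ultimately have "(\<Sum>i<n. (\<omega> ^ (e + 1)) ^ i) = 0"
    by (simp add: sum_gp_strict)
  moreover have "\<omega> ^ i * (\<omega> ^ i) ^ e = (\<omega> ^ (e + 1)) ^ i" for i
    by (simp add: power_mult[symmetric] power_add[symmetric] algebra_simps)
  ultimately show ?thesis
    by (simp add: \<omega>_def)
qed

definition line_point :: "complex \<Rightarrow> nat \<Rightarrow> complex" where
  "line_point s = (\<lambda>l. if l = 0 then 1 else if l = 1 then s else 0)"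

lemma line_point_in_nzvecs: "0 < m \<Longrightarrow> line_point s \<in> nzvecs m"
  by (auto simp: nzvecs_def line_point_def)

lemma proj_eq_line_point_imp_eq:
  assumes "0 < m" "proj_eq m (line_point s) (line_point s')"
  shows "s = s'"
proof -
  obtain t where t: "\<forall>l\<le>m. line_point s' l = t * line_point s l"
    using assms(2) unfolding proj_eq_def by blast
  from t[rule_format, of 0] have "t = 1"
    by (simp add: line_point_def)
  with t[rule_format, of 1] assms(1) show ?thesis
    by (simp add: line_point_def)
qed

lemma prod_powers_line_point:
  assumes "0 < m"
  shows "(\<Prod>l\<le>m. line_point s l ^ \<alpha> l) = s ^ \<alpha> 1 * (\<Prod>l\<le>m. line_point 1 l ^ \<alpha> l)"
proof -
  have split: "(\<Prod>l\<le>m. line_point z l ^ \<alpha> l)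
      = z ^ \<alpha> 1 * (\<Prod>l\<in>{..m} - {1}. line_point z l ^ \<alpha> l)" for z
    using assms by (subst prod.remove[of _ 1]) (auto simp: line_point_def)
  have "(\<Prod>l\<in>{..m} - {1}. line_point s l ^ \<alpha> l) = (\<Prod>l\<in>{..m} - {1}. line_point 1 l ^ \<alpha> l)"
    by (rule prod.cong) (auto simp: line_point_def)
  then show ?thesis
    by (simp add: split)
qed

lemma mexps_le_degree: "\<alpha> \<in> mexps m d \<Longrightarrow> l \<le> m \<Longrightarrow> \<alpha> l \<le> d"
  unfolding mexps_def by (auto intro: member_le_sum[of l "{..m}", simplified])

lemma sum_hpoly_eval_line_roots_of_unity:
  assumes "0 < m" "d + 2 \<le> n"
  shows "(\<Sum>i<n. cis (2 * pi / n) ^ i * hpoly_eval m d c (line_point (cis (2 * pi / n) ^ i))) = 0"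
proof -
  define \<omega> where "\<omega> = cis (2 * pi / n)"
  have monomial: "(\<Sum>i<n. \<omega> ^ i * (\<Prod>l\<le>m. line_point (\<omega> ^ i) l ^ \<alpha> l)) = 0"
    if "\<alpha> \<in> mexps m d" for \<alpha>
  proof -
    define Q where "Q = (\<Prod>l\<le>m. line_point 1 l ^ \<alpha> l)"
    have "\<alpha> 1 + 1 < n"
      using mexps_le_degree[OF that, of 1] assms by simp
    then have "(\<Sum>i<n. \<omega> ^ i * (\<omega> ^ i) ^ \<alpha> 1) = 0"
      unfolding \<omega>_def by (rule sum_root_of_unity_weighted_powers)
    moreover have "(\<Prod>l\<le>m. line_point (\<omega> ^ i) l ^ \<alpha> l) = (\<omega> ^ i) ^ \<alpha> 1 * Q" for i
      unfolding Q_def by (rule prod_powers_line_point[OF assms(1)])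
    ultimately show ?thesis
      by (simp add: mult.assoc[symmetric] flip: sum_distrib_right)
  qed
  have "(\<Sum>i<n. \<omega> ^ i * hpoly_eval m d c (line_point (\<omega> ^ i)))
      = (\<Sum>\<alpha>\<in>mexps m d. c \<alpha> * (\<Sum>i<n. \<omega> ^ i * (\<Prod>l\<le>m. line_point (\<omega> ^ i) l ^ \<alpha> l)))"
    unfolding hpoly_eval_def sum_distrib_left
    by (subst sum.swap) (simp add: algebra_simps)
  also have "\<dots> = 0"
    by (simp add: monomial)
  finally show ?thesis
    by (simp add: \<omega>_def)
qed

theorem lemma6p5:
  fixes m N d k :: nat and c :: "nat \<Rightarrow> (nat \<Rightarrow> nat) \<Rightarrow> complex"
  assumes "m > 0"
    and "is_morphism m d N c"
    and "polys_lin_indep m d N c"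
    and "proj_k_regular m d N c k"
  shows "d \<ge> k - 1"
proof (rule ccontr)
  assume "\<not> d \<ge> k - 1"
  then have "d + 2 \<le> k" by simp
  define \<omega> where "\<omega> = cis (2 * pi / k)"
  define p where "p = (\<lambda>i. line_point (\<omega> ^ i))"
  have "\<not> proj_eq m (p i) (p i')" if "i < k" "i' < k" "i \<noteq> i'" for i i'
  proof
    assume "proj_eq m (p i) (p i')"
    then have "\<omega> ^ i = \<omega> ^ i'"
      unfolding p_def by (rule proj_eq_line_point_imp_eq[OF \<open>m > 0\<close>])
    with inj_onD[OF inj_on_root_of_unity_powers] that show False
      unfolding \<omega>_def by blast
  qed
  then have "vecs_lin_indep N k (\<lambda>i j. hpoly_eval m d (c j) (p i))"
    using assms(4)[unfolded proj_k_regular_def, rule_format, of p]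
      line_point_in_nzvecs[OF \<open>m > 0\<close>] unfolding p_def by blast
  moreover have "\<forall>j\<le>N. (\<Sum>i<k. \<omega> ^ i * hpoly_eval m d (c j) (p i)) = 0"
    using sum_hpoly_eval_line_roots_of_unity[OF \<open>m > 0\<close> \<open>d + 2 \<le> k\<close>]
    unfolding p_def \<omega>_def by blast
  ultimately have "\<forall>i<k. \<omega> ^ i = 0"
    unfolding vecs_lin_indep_def by (rule spec[where x = "\<lambda>i. \<omega> ^ i", THEN mp])
  with \<open>d + 2 \<le> k\<close> show False
    by (metis add_gr_0 power_0 zero_less_numeral zero_neq_one less_le_trans)
qed

end
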